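(* Let $k\ge1$ and $q=2^{-1/k}$. The finite source $\mathcal{A}_k=\{(i,j):0\le i,j<k\}$ with weights $w(i,j)=q^{i+j}$ is $4$-uniform, and it has an optimal binary prefix code (tree) $T$ of fringe thickness at most $2$.
   Context: A finite source with weights $p_1\ge p_2\ge\dots\ge p_N>0$, $N\ge 2$, is $\alpha$-uniform ($\alpha\ge1$) if $p_1/p_N\le\alpha$. A prefix code is optimal for a finite weighted source if it minimizes $\sum_i p_i\ell_i$ over all binary prefix codes, $\ell_i$ the codeword lengths. The fringe thickness of a finite tree is the maximum difference between the depths of any two of its leaves. *)

theory Defs
  imports Complex_Main "HOL-Library.Sublist"
begin

definition alpha_uniform :: "real \<Rightarrow> ('a \<Rightarrow> real) \<Rightarrow> 'a set \<Rightarrow> bool" where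
  "alpha_uniform \<alpha> w S \<longleftrightarrow> 1 \<le> \<alpha> \<and> finite S \<and> S \<noteq> {} \<and> (\<forall>x\<in>S. 0 < w x) \<and>
     Max (w ` S) / Min (w ` S) \<le> \<alpha>"

text \<open>A binary prefix code on S: codewords are bit strings, none a prefix of another
(this includes injectivity, since prefix is reflexive).\<close>
definition prefix_code :: "'a set \<Rightarrow> ('a \<Rightarrow> bool list) \<Rightarrow> bool" where
  "prefix_code S c \<longleftrightarrow> (\<forall>x\<in>S. \<forall>y\<in>S. x \<noteq> y \<longrightarrow> \<not> prefix (c x) (c y))"

definition code_cost :: "('a \<Rightarrow> real) \<Rightarrow> 'a set \<Rightarrow> ('a \<Rightarrow> bool list) \<Rightarrow> real" where
  "code_cost w S c = (\<Sum>x\<in>S. w x * real (length (c x)))"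

definition optimal_code :: "('a \<Rightarrow> real) \<Rightarrow> 'a set \<Rightarrow> ('a \<Rightarrow> bool list) \<Rightarrow> bool" where
  "optimal_code w S c \<longleftrightarrow> prefix_code S c \<and>
     (\<forall>c'. prefix_code S c' \<longrightarrow> code_cost w S c \<le> code_cost w S c')"

text \<open>Fringe thickness of the code tree: leaves are the codewords, the depth of a leaf is
the codeword length, so it is max minus min codeword length.\<close>
definition fringe_thickness :: "'a set \<Rightarrow> ('a \<Rightarrow> bool list) \<Rightarrow> nat" where
  "fringe_thickness S c = Max ((\<lambda>x. length (c x)) ` S) - Min ((\<lambda>x. length (c x)) ` S)"

end

theory Submission
  imports Defs "HOL-Library.FuncSet"
begin

text \<open>
  All weights of the source lie in the half-open interval (1/4, 1], and for
  k \<ge> 2 the symbol (1, k-1) has weight exactly q^k = 1/2.  Four-uniformity is immediate.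
  For the code, take any optimal prefix code (one exists since only finitely many codes have
  bounded length and long codewords are too expensive) and show its fringe is thin.

  The tool is Kraft's inequality in both directions: a length assignment l with
  lengths \<le> n is realised by a prefix code iff the scaled Kraft sum
  \<Sum> 2^(n - l x) is at most 2^n.  Hence an optimal code admits no reassignment of lengths
  that keeps the Kraft sum bounded and lowers the cost.  With D the maximal and m the
  minimal codeword length, D \<ge> m + 3 would allow such a reassignment: the deepest level
  carries two codewords (parity of the Kraft sum), and depending on whether the weight-1/2
  symbol sits at depth \<le> D-2, D-1 or D, an explicit exchange of a few lengths lowers the
  cost, contradicting optimality.
\<close>

section \<open>Kraft's inequality and its converse\<close>

text \<open>Scaled Kraft sum of a length assignment: the number of words of length n that extend
  some codeword, counted with multiplicity.\<close>
definition kraft_sum :: "nat \<Rightarrow> 'a set \<Rightarrow> ('a \<Rightarrow> nat) \<Rightarrow> int" where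
  "kraft_sum n S l = (\<Sum>x\<in>S. 2 ^ (n - l x))"

definition extensions :: "nat \<Rightarrow> bool list \<Rightarrow> bool list set" where
  "extensions n u = {v. length v = n \<and> prefix u v}"

lemma card_words: "card {v :: bool list. length v = n} = 2 ^ n"
  using card_lists_length_eq[of "UNIV :: bool set" n] by simp

lemma finite_words: "finite {v :: bool list. length v = n}"
  using finite_lists_length_eq[of "UNIV :: bool set" n] by simp

lemma extensions_subset_words: "extensions n u \<subseteq> {v. length v = n}"
  unfolding extensions_def by auto

lemma finite_extensions: "finite (extensions n u)"
  using finite_subset[OF extensions_subset_words finite_words] .

lemma card_extensions:
  assumes "length u \<le> n"
  shows "card (extensions n u) = 2 ^ (n - length u)"
proof -
  have "extensions n u = (\<lambda>t. u @ t) ` {t. length t = n - length u}"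
    using assms unfolding extensions_def prefix_def by auto
  then show ?thesis by (simp add: card_image inj_on_def card_words)
qed

text \<open>Kraft's inequality: extension sets of distinct codewords are disjoint.\<close>
lemma kraft_inequality:
  assumes fin: "finite S" and code: "prefix_code S c" and bound: "\<forall>x\<in>S. length (c x) \<le> n"
  shows "kraft_sum n S (\<lambda>x. length (c x)) \<le> 2 ^ n"
proof -
  have disjoint: "extensions n (c x) \<inter> extensions n (c y) = {}"
    if "x \<in> S" "y \<in> S" "x \<noteq> y" for x y
  proof (rule ccontr)
    assume "extensions n (c x) \<inter> extensions n (c y) \<noteq> {}"
    then obtain v where "prefix (c x) v" "prefix (c y) v" unfolding extensions_def by auto
    then have "prefix (c x) (c y) \<or> prefix (c y) (c x)" using prefix_same_cases by blast
    then show False using code that unfolding prefix_code_def by metis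
  qed
  have "(\<Sum>x\<in>S. (2::nat) ^ (n - length (c x))) = (\<Sum>x\<in>S. card (extensions n (c x)))"
    using bound by (simp add: card_extensions)
  also have "\<dots> = card (\<Union>x\<in>S. extensions n (c x))"
    using disjoint by (intro card_UN_disjoint[symmetric]) (auto simp: fin finite_extensions)
  also have "\<dots> \<le> 2 ^ n"
    using card_mono[OF finite_words, of "\<Union>x\<in>S. extensions n (c x)" n] extensions_subset_words
    by (auto simp: card_words)
  finally have "int (\<Sum>x\<in>S. (2::nat) ^ (n - length (c x))) \<le> int (2 ^ n)"
    by (simp only: of_nat_le_iff)
  then show ?thesis by (simp add: kraft_sum_def)
qed

lemma fresh_word:
  fixes c :: "'a \<Rightarrow> bool list"
  assumes fin: "finite S" and bound: "\<forall>y\<in>S. length (c y) \<le> L"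
    and sum_less: "kraft_sum L S (\<lambda>y. length (c y)) < 2 ^ L"
  shows "\<exists>v. length v = L \<and> (\<forall>y\<in>S. \<not> prefix (c y) v \<and> \<not> prefix v (c y))"
proof -
  define used where "used = (\<Union>y\<in>S. extensions L (c y))"
  have "card used \<le> (\<Sum>y\<in>S. card (extensions L (c y)))"
    unfolding used_def by (rule card_UN_le[OF fin])
  also have "\<dots> = (\<Sum>y\<in>S. (2::nat) ^ (L - length (c y)))"
    using bound by (intro sum.cong) (auto simp: card_extensions)
  finally have "int (card used) \<le> int (\<Sum>y\<in>S. (2::nat) ^ (L - length (c y)))"
    by (simp only: of_nat_le_iff)
  then have "int (card used) \<le> kraft_sum L S (\<lambda>y. length (c y))"
    by (simp add: kraft_sum_def)
  then have "int (card used) < int (2 ^ L)"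
    using sum_less unfolding of_nat_power of_nat_numeral by linarith
  then have "card used < card {v :: bool list. length v = L}"
    by (simp only: of_nat_less_iff card_words)
  then have "\<not> {v :: bool list. length v = L} \<subseteq> used"
    using card_mono[of used "{v. length v = L}"] fin by (auto simp: used_def finite_extensions)
  then obtain v where v: "length v = L" "v \<notin> used" by auto
  have "\<not> prefix (c y) v \<and> \<not> prefix v (c y)" if "y \<in> S" for y
  proof -
    have "\<not> prefix (c y) v" using v that unfolding used_def extensions_def by auto
    moreover have "prefix v (c y) \<Longrightarrow> v = c y"
      using bound that v(1) by (auto simp: prefix_def)
    ultimately show ?thesis by auto
  qed
  with v(1) show ?thesis by blast
qed

lemma prefix_code_insert:
  assumes "prefix_code S c" and "\<forall>y\<in>S. \<not> prefix (c y) v \<and> \<not> prefix v (c y)"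
  shows "prefix_code (insert x S) (c(x := v))"
  using assms unfolding prefix_code_def by (auto simp: fun_upd_def)

text \<open>Converse of Kraft's inequality: lengths with bounded Kraft sum are realised by a prefix
  code.  Symbols are inserted by increasing length, each receiving a fresh word.\<close>
lemma kraft_converse:
  assumes "finite S"
  shows "(\<forall>x\<in>S. l x \<le> n) \<longrightarrow> kraft_sum n S l \<le> 2 ^ n \<longrightarrow>
         (\<exists>c. prefix_code S c \<and> (\<forall>x\<in>S. length (c x) = l x))"
  using assms
proof (induction S rule: finite_ranking_induct[where f = l])
  case empty
  then show ?case by (simp add: prefix_code_def)
next
  case (insert x S)
  show ?case
  proof (intro impI)
    assume le: "\<forall>y\<in>insert x S. l y \<le> n" and kraft: "kraft_sum n (insert x S) l \<le> 2 ^ n"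
    show "\<exists>c. prefix_code (insert x S) c \<and> (\<forall>y\<in>insert x S. length (c y) = l y)"
    proof (cases "x \<in> S")
      case True
      then show ?thesis using insert.IH le kraft by (simp add: insert_absorb)
    next
      case False
      define L where "L = l x"
      have "L \<le> n" using le L_def by simp
      have kraft_split: "2 ^ (n - L) + kraft_sum n S l \<le> 2 ^ n"
        using kraft False insert.hyps(1) by (simp add: kraft_sum_def L_def)
      then obtain c where c: "prefix_code S c" "\<forall>y\<in>S. length (c y) = l y"
        using insert.IH le by (auto simp: kraft_sum_def intro: order_trans[rotated])
      have below: "\<forall>y\<in>S. l y \<le> L" using insert.hyps(2) L_def by simp
      have "2 ^ (n - L) * kraft_sum L S l = kraft_sum n S l"
        unfolding kraft_sum_def sum_distrib_left
        using below \<open>L \<le> n\<close> by (intro sum.cong) (auto simp flip: power_add)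
      also have "\<dots> \<le> 2 ^ (n - L) * (2 ^ L - 1)"
        using kraft_split \<open>L \<le> n\<close> by (simp add: algebra_simps flip: power_add)
      finally have "kraft_sum L S (\<lambda>y. length (c y)) < 2 ^ L"
        using c(2) by (simp add: kraft_sum_def)
      then obtain v where v: "length v = L" "\<forall>y\<in>S. \<not> prefix (c y) v \<and> \<not> prefix v (c y)"
        using fresh_word[OF insert.hyps(1), of c L] c(2) below by auto
      have "prefix_code (insert x S) (c(x := v))"
        using prefix_code_insert[OF c(1) v(2)] .
      moreover have "\<forall>y\<in>insert x S. length ((c(x := v)) y) = l y"
        using c(2) v(1) L_def by auto
      ultimately show ?thesis by blast
    qed
  qed
qed

section \<open>Optimal codes\<close>

definition length_cost :: "('a \<Rightarrow> real) \<Rightarrow> 'a set \<Rightarrow> ('a \<Rightarrow> nat) \<Rightarrow> real" where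
  "length_cost w S l = (\<Sum>x\<in>S. w x * real (l x))"

lemma code_cost_eq_length_cost: "code_cost w S c = length_cost w S (\<lambda>x. length (c x))"
  by (simp add: code_cost_def length_cost_def)

text \<open>Optimal codes exist for positive weights: compare with a fixed-length code and
  minimise over the finitely many codes of bounded length.\<close>
lemma optimal_code_exists:
  fixes w :: "'a \<Rightarrow> real"
  assumes fin: "finite S" and wpos: "\<forall>x\<in>S. 0 < w x" and ne: "S \<noteq> {}"
  shows "\<exists>c. optimal_code w S c"
proof -
  define n where "n = card S"
  have "kraft_sum n S (\<lambda>_. n) \<le> 2 ^ n"
    using less_exp[of n] by (simp add: kraft_sum_def n_def)
  then obtain c0 where c0: "prefix_code S c0" "\<forall>x\<in>S. length (c0 x) = n"
    using kraft_converse[OF fin, of "\<lambda>_. n" n] by auto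
  define wmin where "wmin = Min (w ` S)"
  have wmin: "0 < wmin" "\<forall>x\<in>S. wmin \<le> w x" unfolding wmin_def using fin ne wpos by auto
  text \<open>Codes with a codeword longer than B cost more than c0.\<close>
  define B where "B = max n (nat \<lceil>code_cost w S c0 / wmin\<rceil>)"
  have B: "code_cost w S c0 \<le> wmin * real B"
  proof -
    have "code_cost w S c0 / wmin \<le> real B" unfolding B_def by linarith
    then show ?thesis using wmin(1) by (simp add: field_simps)
  qed
  define P where "P = {c \<in> PiE S (\<lambda>_. {u::bool list. length u \<le> B}). prefix_code S c}"
  have "finite {u::bool list. length u \<le> B}"
    using finite_lists_length_le[of "UNIV::bool set" B] by simp
  then have "finite P" unfolding P_def
    by (intro finite_subset[OF _ finite_PiE[OF fin]]) auto
  have restrict_code: "prefix_code S (restrict c S) \<longleftrightarrow> prefix_code S c" for c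
    unfolding prefix_code_def by auto
  have restrict_cost: "code_cost w S (restrict c S) = code_cost w S c" for c
    unfolding code_cost_def by (rule sum.cong) auto
  have "restrict c0 S \<in> P" unfolding P_def using c0 restrict_code B_def by auto
  define cm where "cm = arg_min_on (code_cost w S) P"
  have cm: "cm \<in> P" "\<forall>c\<in>P. code_cost w S cm \<le> code_cost w S c"
    using arg_min_if_finite[OF \<open>finite P\<close>, of "code_cost w S"] \<open>restrict c0 S \<in> P\<close>
    unfolding cm_def by (auto simp: not_less)
  have "code_cost w S cm \<le> code_cost w S c'" if code: "prefix_code S c'" for c'
  proof (cases "\<forall>x\<in>S. length (c' x) \<le> B")
    case True
    then have "restrict c' S \<in> P" unfolding P_def using restrict_code code by auto
    then show ?thesis using cm(2) restrict_cost by metis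
  next
    case False
    then obtain x where x: "x \<in> S" "B < length (c' x)" by auto
    have "code_cost w S cm \<le> code_cost w S c0"
      using cm(2) \<open>restrict c0 S \<in> P\<close> restrict_cost by metis
    also have "\<dots> \<le> wmin * real B" by (rule B)
    also have "\<dots> < wmin * real (length (c' x))" using x(2) wmin(1) by simp
    also have "\<dots> \<le> w x * real (length (c' x))" using wmin(2) x(1) by (simp add: mult_right_mono)
    also have "\<dots> \<le> code_cost w S c'" unfolding code_cost_def
      using x(1) fin wpos by (intro member_le_sum) auto
    finally show ?thesis by simp
  qed
  then have "optimal_code w S cm" using cm(1) by (simp add: optimal_code_def P_def)
  then show ?thesis by blast
qed

lemma optimal_length_cost_le:
  assumes fin: "finite S" and opt: "optimal_code w S c"
    and bound: "\<forall>x\<in>S. l x \<le> n" and kraft: "kraft_sum n S l \<le> 2 ^ n"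
  shows "length_cost w S (\<lambda>x. length (c x)) \<le> length_cost w S l"
proof -
  obtain c' where c': "prefix_code S c'" "\<forall>x\<in>S. length (c' x) = l x"
    using kraft_converse[OF fin] bound kraft by blast
  have "length_cost w S l = code_cost w S c'"
    unfolding code_cost_eq_length_cost length_cost_def using c'(2) by simp
  then show ?thesis using opt c'(1) by (simp add: optimal_code_def code_cost_eq_length_cost)
qed

lemma sum_fun_upd:
  fixes g :: "'a \<Rightarrow> 'c \<Rightarrow> 'b::ab_group_add"
  assumes "finite S" "x \<in> S"
  shows "(\<Sum>y\<in>S. g y ((l(x := v)) y)) = (\<Sum>y\<in>S. g y (l y)) - g x (l x) + g x v"
  using sum.remove[OF assms, of "\<lambda>y. g y ((l(x := v)) y)"] sum.remove[OF assms, of "\<lambda>y. g y (l y)"]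
  by (simp add: sum.cong[of "S - {x}" _ "\<lambda>y. g y ((l(x := v)) y)" "\<lambda>y. g y (l y)"])

lemma kraft_sum_upd:
  "finite S \<Longrightarrow> x \<in> S \<Longrightarrow> kraft_sum n S (l(x := v)) = kraft_sum n S l - 2 ^ (n - l x) + 2 ^ (n - v)"
  unfolding kraft_sum_def by (rule sum_fun_upd[where g = "\<lambda>_ t. 2 ^ (n - t)"])

lemma length_cost_upd:
  "finite S \<Longrightarrow> x \<in> S \<Longrightarrow> length_cost w S (l(x := v)) = length_cost w S l - w x * l x + w x * v"
  unfolding length_cost_def by (rule sum_fun_upd[where g = "\<lambda>y t. w y * real t"])

text \<open>In an optimal code with positive weights and nonempty words, the maximal length is
  attained twice: otherwise the Kraft sum at the maximal depth D is odd, hence below 2^D,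
  and the single deepest codeword could be shortened.\<close>
lemma optimal_deepest_pair:
  assumes fin: "finite S" and opt: "optimal_code w S c" and wpos: "\<forall>x\<in>S. 0 < w x"
    and D: "D = Max ((\<lambda>x. length (c x)) ` S)" and z1: "z1 \<in> S" "length (c z1) = D"
    and D_pos: "1 \<le> D"
  shows "\<exists>z2\<in>S. z2 \<noteq> z1 \<and> length (c z2) = D"
proof (rule ccontr)
  define l where "l = (\<lambda>x. length (c x))"
  assume "\<not> ?thesis"
  then have shorter: "\<forall>y\<in>S - {z1}. l y < D"
    using fin D by (fastforce simp: l_def intro: le_neq_implies_less)
  have bound: "\<forall>y\<in>S. l y \<le> D" using fin D by (simp add: l_def)
  have even_rest: "2 dvd (\<Sum>y\<in>S - {z1}. (2::int) ^ (D - l y))"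
    using shorter by (intro dvd_sum) auto
  have "kraft_sum D S l = 1 + (\<Sum>y\<in>S - {z1}. 2 ^ (D - l y))"
    unfolding kraft_sum_def using sum.remove[OF fin z1(1), of "\<lambda>y. 2 ^ (D - l y)"] z1
    by (simp add: l_def)
  then have "odd (kraft_sum D S l)" using even_rest by simp
  then have "kraft_sum D S l \<noteq> 2 ^ D" using D_pos by auto
  moreover have "kraft_sum D S l \<le> 2 ^ D"
    using kraft_inequality[OF fin] opt bound by (simp add: optimal_code_def l_def)
  ultimately have "kraft_sum D S l \<le> 2 ^ D - 1" by linarith
  then have "kraft_sum D S (l(z1 := D - 1)) \<le> 2 ^ D"
    using D_pos z1 by (simp add: kraft_sum_upd[OF fin z1(1)] l_def)
  moreover have "\<forall>y\<in>S. (l(z1 := D - 1)) y \<le> D" using bound by simp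
  ultimately have "length_cost w S l \<le> length_cost w S (l(z1 := D - 1))"
    using optimal_length_cost_le[OF fin opt] unfolding l_def by blast
  moreover have "0 < w z1" using wpos z1 by blast
  ultimately show False
    using D_pos z1 by (simp add: length_cost_upd[OF fin z1(1)] l_def algebra_simps)
qed

section \<open>Optimal codes for weights in (1/4, 1] containing a weight 1/2\<close>

locale quarter_weight_code =
  fixes S :: "'a set" and w :: "'a \<Rightarrow> real" and c :: "'a \<Rightarrow> bool list" and e :: 'a
  assumes finite_S: "finite S" and optimal: "optimal_code w S c"
    and weight_bounds: "\<And>x. x \<in> S \<Longrightarrow> 1/4 < w x \<and> w x \<le> 1"
    and e_in_S: "e \<in> S" and weight_e: "w e = 1/2"
begin

abbreviation len :: "'a \<Rightarrow> nat" where "len x \<equiv> length (c x)"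

definition depth :: nat where "depth = Max (len ` S)"

lemma len_le_depth: "x \<in> S \<Longrightarrow> len x \<le> depth"
  unfolding depth_def using finite_S by simp

lemma depth_attained: "\<exists>z\<in>S. len z = depth"
proof -
  have "Max (len ` S) \<in> len ` S" using finite_S e_in_S by (intro Max_in) auto
  then show ?thesis by (auto simp: depth_def)
qed

lemma kraft_at_depth: "kraft_sum depth S len \<le> 2 ^ depth"
  using kraft_inequality[OF finite_S] optimal len_le_depth by (simp add: optimal_code_def)

lemma no_cheaper_lengths:
  assumes "\<forall>y\<in>S. l y \<le> depth" and "kraft_sum depth S l \<le> 2 ^ depth"
  shows "\<not> length_cost w S l < length_cost w S len"
  using optimal_length_cost_le[OF finite_S optimal assms] by simp

lemma weights_pos: "\<forall>x\<in>S. 0 < w x"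
  using weight_bounds by force

lemma deepest_pair:
  assumes "1 \<le> depth"
  obtains z1 z2 where "z1 \<in> S" "z2 \<in> S" "z1 \<noteq> z2" "len z1 = depth" "len z2 = depth"
proof -
  obtain z1 where z1: "z1 \<in> S" "len z1 = depth" using depth_attained by blast
  moreover obtain z2 where "z2 \<in> S" "z2 \<noteq> z1" "len z2 = depth"
    using optimal_deepest_pair[OF finite_S optimal weights_pos depth_def z1 assms] by blast
  ultimately show thesis using that by blast
qed

text \<open>The weight-1/2 symbol lies within one level of the bottom: otherwise move it one
  level down and lift two deepest codewords, trading 1/2 for two weights above 1/4.\<close>
lemma half_weight_near_bottom: "depth \<le> len e + 1"
proof (rule ccontr)
  assume "\<not> ?thesis"
  then have deep: "len e + 2 \<le> depth" by simp
  then have "1 \<le> depth" by simp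
  then obtain z1 z2 where z: "z1 \<in> S" "z2 \<in> S" "z1 \<noteq> z2" "len z1 = depth" "len z2 = depth"
    by (rule deepest_pair)
  have ne: "e \<noteq> z1" "e \<noteq> z2" using z deep by auto
  define l' where "l' = len(e := len e + 1, z1 := depth - 1, z2 := depth - 1)"
  have "kraft_sum depth S l' = kraft_sum depth S len - 2 ^ (depth - len e)
          + 2 ^ (depth - Suc (len e)) + 2"
    using z ne deep
    by (simp add: l'_def kraft_sum_upd[OF finite_S] e_in_S)
  moreover have "(2::int) ^ (depth - len e) = 2 * 2 ^ (depth - Suc (len e))"
    using deep by (simp flip: power_Suc add: Suc_diff_Suc)
  moreover have "(2::int) \<le> 2 ^ (depth - Suc (len e))"
    using power_increasing[of 1 "depth - Suc (len e)" "2::int"] deep by simp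
  ultimately have kraft: "kraft_sum depth S l' \<le> 2 ^ depth" using kraft_at_depth by linarith
  have bound: "\<forall>y\<in>S. l' y \<le> depth" using len_le_depth deep by (auto simp: l'_def)
  have "length_cost w S l' = length_cost w S len + w e - w z1 - w z2"
    using z ne deep
    by (simp add: l'_def length_cost_upd[OF finite_S] e_in_S algebra_simps)
  moreover have "1/4 < w z1" "1/4 < w z2" using weight_bounds z by auto
  ultimately have "length_cost w S l' < length_cost w S len" using weight_e by linarith
  then show False using no_cheaper_lengths[OF bound kraft] by blast
qed

lemma lower_shallow_codeword:
  assumes x: "x \<in> S" "len x + 3 \<le> depth"
  shows "kraft_sum depth S (len(x := len x + 1)) + 4 \<le> kraft_sum depth S len"
proof -
  have "(2::int) ^ (depth - len x) = 2 * 2 ^ (depth - Suc (len x))"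
    using x(2) by (simp flip: power_Suc add: Suc_diff_Suc)
  moreover have "(4::int) \<le> 2 ^ (depth - Suc (len x))"
    using power_increasing[of 2 "depth - Suc (len x)" "2::int"] x(2) by simp
  ultimately show ?thesis by (simp add: kraft_sum_upd[OF finite_S x(1)])
qed

text \<open>If the weight-1/2 symbol sits one level above the bottom and the fringe has thickness
  at least 3, lower a shallowest codeword, lift the weight-1/2 symbol and two deepest ones:
  the cost changes by w x - w e - w z1 - w z2 < 1 - 1/2 - 1/4 - 1/4.\<close>
lemma half_weight_not_above_bottom:
  assumes x: "x \<in> S" "len x + 3 \<le> depth"
  shows "len e + 1 \<noteq> depth"
proof
  assume e_level: "len e + 1 = depth"
  have "1 \<le> depth" using x(2) by simp
  then obtain z1 z2 where z: "z1 \<in> S" "z2 \<in> S" "z1 \<noteq> z2" "len z1 = depth" "len z2 = depth"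
    by (rule deepest_pair)
  have ne: "e \<noteq> z1" "e \<noteq> z2" "x \<noteq> z1" "x \<noteq> z2" "x \<noteq> e" using z x e_level by auto
  define l0 where "l0 = len(x := len x + 1)"
  define l' where "l' = l0(e := depth - 2, z1 := depth - 1, z2 := depth - 1)"
  have l0: "l0 e = len e" "l0 z1 = depth" "l0 z2 = depth" using ne z by (auto simp: l0_def)
  have "depth - (depth - 2) = 2" "depth - (depth - 1) = 1" "depth - len e = 1"
    using x(2) e_level by auto
  then have "kraft_sum depth S l' = kraft_sum depth S l0 + 4"
    using z(1,2,3) ne by (simp add: l'_def l0 kraft_sum_upd[OF finite_S] e_in_S)
  then have kraft: "kraft_sum depth S l' \<le> 2 ^ depth"
    using lower_shallow_codeword[OF x] kraft_at_depth by (simp add: l0_def)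
  have bound: "\<forall>y\<in>S. l' y \<le> depth"
    using len_le_depth x(2) by (auto simp: l'_def l0_def)
  have "length_cost w S l' = length_cost w S len + w x - w e - w z1 - w z2"
    using z ne x e_level[symmetric]
    by (simp add: l'_def l0_def length_cost_upd[OF finite_S] e_in_S algebra_simps)
  moreover have "w x \<le> 1" "1/4 < w z1" "1/4 < w z2" using weight_bounds z x by auto
  ultimately have "length_cost w S l' < length_cost w S len" using weight_e by linarith
  then show False using no_cheaper_lengths[OF bound kraft] by blast
qed

text \<open>If the weight-1/2 symbol is itself deepest and the fringe has thickness at least 3,
  lower a shallowest codeword, lift the weight-1/2 symbol two levels and another deepest
  codeword one level: the cost changes by w x - 2 w e - w z < 1 - 1 - 1/4.\<close>
lemma half_weight_not_at_bottom:
  assumes x: "x \<in> S" "len x + 3 \<le> depth"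
  shows "len e \<noteq> depth"
proof
  assume e_level: "len e = depth"
  obtain z where z: "z \<in> S" "z \<noteq> e" "len z = depth"
    using optimal_deepest_pair[OF finite_S optimal weights_pos depth_def e_in_S e_level] x(2)
    by auto
  have ne: "x \<noteq> z" "x \<noteq> e" using z x e_level by auto
  define l0 where "l0 = len(x := len x + 1)"
  define l' where "l' = l0(e := depth - 2, z := depth - 1)"
  have l0: "l0 e = depth" "l0 z = depth" using ne z e_level by (auto simp: l0_def)
  have levels: "depth - (depth - 2) = 2" "depth - (depth - 1) = 1" using x(2) by auto
  have "kraft_sum depth S (l0(e := depth - 2)) = kraft_sum depth S l0 + 3"
    using kraft_sum_upd[OF finite_S e_in_S, of depth l0 "depth - 2"] l0 levels by simp
  moreover have "kraft_sum depth S l' = kraft_sum depth S (l0(e := depth - 2)) + 1"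
    using kraft_sum_upd[OF finite_S z(1), of depth "l0(e := depth - 2)" "depth - 1"] l0 levels z(2)
    by (simp add: l'_def)
  ultimately have "kraft_sum depth S l' = kraft_sum depth S l0 + 4" by simp
  then have kraft: "kraft_sum depth S l' \<le> 2 ^ depth"
    using lower_shallow_codeword[OF x] kraft_at_depth by (simp add: l0_def)
  have bound: "\<forall>y\<in>S. l' y \<le> depth"
    using len_le_depth x(2) by (auto simp: l'_def l0_def)
  have "length_cost w S l' = length_cost w S len + w x - 2 * w e - w z"
    using z ne x e_level
    by (simp add: l'_def l0_def length_cost_upd[OF finite_S] e_in_S algebra_simps)
  moreover have "w x \<le> 1" "1/4 < w z" using weight_bounds z x by auto
  ultimately have "length_cost w S l' < length_cost w S len" using weight_e by linarith
  then show False using no_cheaper_lengths[OF bound kraft] by blast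
qed

theorem thin_fringe: "Max (len ` S) - Min (len ` S) \<le> 2"
proof (rule ccontr)
  assume "\<not> ?thesis"
  moreover have "Min (len ` S) \<in> len ` S" using finite_S e_in_S by (intro Min_in) auto
  then obtain x where x: "x \<in> S" "len x = Min (len ` S)" by auto
  ultimately have shallow: "len x + 3 \<le> depth" by (simp add: depth_def)
  have "depth \<le> len e + 1" "len e \<le> depth"
    using half_weight_near_bottom len_le_depth e_in_S by auto
  then show False
    using half_weight_not_above_bottom[OF x(1) shallow] half_weight_not_at_bottom[OF x(1) shallow]
    by linarith
qed

end

section \<open>The source A_k\<close>

lemma alpha_uniform_of_bounds:
  assumes "finite S" "S \<noteq> {}" "0 < a" "1 \<le> \<alpha>"
    and bounds: "\<forall>x\<in>S. a \<le> w x \<and> w x \<le> \<alpha> * a"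
  shows "alpha_uniform \<alpha> w S"
proof -
  have "Max (w ` S) \<le> \<alpha> * a" "a \<le> Min (w ` S)"
    using assms by auto
  then have "Max (w ` S) \<le> \<alpha> * Min (w ` S)"
    using mult_left_mono[of a "Min (w ` S)" \<alpha>] \<open>1 \<le> \<alpha>\<close> by linarith
  then have "Max (w ` S) / Min (w ` S) \<le> \<alpha>"
    using \<open>0 < a\<close> \<open>a \<le> Min (w ` S)\<close> by (simp add: divide_le_eq)
  then show ?thesis
    using assms unfolding alpha_uniform_def by (auto intro: order_less_le_trans)
qed

lemma root_two_power:
  assumes "1 \<le> k"
  shows "(2 powr (- 1 / real k)) ^ k = (1/2 :: real)"
proof -
  have "(2 powr (- 1 / real k)) ^ k = 2 powr (- 1 / real k * real k)"
    by (simp add: powr_realpow[symmetric] powr_powr)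
  also have "\<dots> = 1/2" using assms by (simp add: powr_minus)
  finally show ?thesis .
qed

text \<open>All weights q^(i+j) with i, j < k lie in (1/4, 1], because i + j < 2k.\<close>
lemma source_weight_bounds:
  assumes "1 \<le> k" "i < k" "j < k"
  shows "1/4 < (2 powr (- 1 / real k)) ^ (i + j) \<and> (2 powr (- 1 / real k)) ^ (i + j) \<le> (1::real)"
proof -
  define q :: real where "q = 2 powr (- 1 / real k)"
  have q: "0 < q" "q < 1" using assms(1) by (auto simp: q_def powr_less_one)
  have "q ^ (2 * k) = (q ^ k) ^ 2" by (metis power_mult mult.commute)
  also have "\<dots> = (1/2) ^ 2" unfolding q_def root_two_power[OF assms(1)] ..
  finally have "q ^ (2 * k) = 1/4" by (simp add: power2_eq_square)
  moreover have "q ^ (2 * k) < q ^ (i + j)" using q assms by (intro power_strict_decreasing) auto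
  moreover have "q ^ (i + j) \<le> 1" using q by (simp add: power_le_one)
  ultimately show ?thesis by (simp add: q_def)
qed

theorem lemma5:
  fixes k :: nat and q :: real and w :: "nat \<times> nat \<Rightarrow> real"
  assumes "1 \<le> k"
  defines "q \<equiv> 2 powr (- 1 / real k)"
      and "w \<equiv> (\<lambda>(i, j). q ^ (i + j))"
  shows "alpha_uniform 4 w ({0..<k} \<times> {0..<k}) \<and>
         (\<exists>T. optimal_code w ({0..<k} \<times> {0..<k}) T \<and>
              fringe_thickness ({0..<k} \<times> {0..<k}) T \<le> 2)"
proof -
  define S where "S = {0..<k} \<times> {0..<k}"
  have fin: "finite S" and nonempty: "S \<noteq> {}" using assms(1) by (auto simp: S_def)
  have bounds: "\<And>x. x \<in> S \<Longrightarrow> 1/4 < w x \<and> w x \<le> 1"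
    using source_weight_bounds[OF assms(1)] by (auto simp: S_def w_def q_def)
  have uniform: "alpha_uniform 4 w S"
    using bounds by (intro alpha_uniform_of_bounds[OF fin nonempty, of "1/4"]) (auto simp: less_imp_le)
  obtain T where T: "optimal_code w S T"
    using optimal_code_exists[OF fin _ nonempty] bounds by force
  have "fringe_thickness S T \<le> 2"
  proof (cases "k = 1")
    case True
    then show ?thesis by (simp add: S_def fringe_thickness_def)
  next
    case False
    have "(1, k - 1) \<in> S" using False assms(1) by (auto simp: S_def)
    moreover have "w (1, k - 1) = q ^ k"
      using assms(1) by (cases k) (auto simp: w_def)
    then have "w (1, k - 1) = 1/2" unfolding q_def root_two_power[OF assms(1)] .
    ultimately interpret quarter_weight_code S w T "(1, k - 1)"
      using fin T bounds by unfold_locales auto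
    show ?thesis using thin_fringe by (simp add: fringe_thickness_def)
  qed
  then show ?thesis using uniform T by (auto simp: S_def)
qed

end
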